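(* For every $\lambda\in(0,\infty)$ and $\xi\in\{0,1\}^E$, the series below converges absolutely and \[ \frac{\lambda}{N+\lambda}\sum_{n=0}^\infty\Big(\frac N{N+\lambda}\Big)^n\frac1NS_\xi\big(L_0^n(J)\big)=p_1(\xi)^2+\frac1NS_\xi\left(\frac{2(I-Q)(\lambda+2-2Q)^{-1}}{\lambda\,\mathrm{tr}\big((\lambda+2-2Q)^{-1}\big)}\right). \]
   Context: $E$ is a finite set with $N=\#E>8$ elements, listed in a fixed order; $\mathsf M_E$ is the space of complex $N\times N$ matrices indexed by $E\times E$. $Q$ is an irreducible stochastic matrix on $E$ with $Q(x,y)=Q(y,x)$ for all $x,y$ and $\mathrm{tr}(Q)=0$. $I$ is the identity, $J$ the matrix with all entries $1/N$, and $(\lambda+2-2Q)^{-1}$ the inverse of $(\lambda+2)I-2Q$. For $\xi\in\{0,1\}^E$ regarded as a vector, $S_\xi(C)=\langle\xi|C|\xi\rangle=\sum_{x,y}\xi(x)C(x,y)\xi(y)$, and $p_1(\xi)=\frac1N\sum_{x\in E}\xi(x)$. The linear operator $L_0:\mathsf M_E\to\mathsf M_E$ is $L_0(C)=\frac{N-2}NC+\frac1N(CQ+QC)-\frac{2\,\mathrm{tr}(C)}{N^2}Q+\frac{2\,\mathrm{tr}(C)}{N^2}I$, and $L_0^n$ is its $n$-fold composition. *)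

theory Defs
  imports "HOL-Analysis.Analysis"
begin

type_synonym 'e cmat = "complex^'e^'e"

definition cmat_of :: "real^'e^'e \<Rightarrow> 'e cmat" where
  "cmat_of Q = (\<chi> i j. complex_of_real (Q$i$j))"

definition stochastic :: "real^'e^'e \<Rightarrow> bool" where
  "stochastic Q \<longleftrightarrow> (\<forall>x y. Q$x$y \<ge> 0) \<and> (\<forall>x. (\<Sum>y\<in>UNIV. Q$x$y) = 1)"

definition irreducible_mat :: "real^'e^'e \<Rightarrow> bool" where
  "irreducible_mat Q \<longleftrightarrow> (\<forall>x y. (x, y) \<in> {(a, b). Q$a$b > 0}\<^sup>*)"

definition symmetric_mat :: "real^'e^'e \<Rightarrow> bool" where
  "symmetric_mat Q \<longleftrightarrow> (\<forall>x y. Q$x$y = Q$y$x)"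

definition Jmat :: "'e::finite cmat" where
  "Jmat = (\<chi> i j. 1 / of_nat CARD('e))"

definition S_xi :: "('e::finite \<Rightarrow> bool) \<Rightarrow> 'e cmat \<Rightarrow> complex" where
  "S_xi \<xi> C = (\<Sum>x\<in>UNIV. \<Sum>y\<in>UNIV. of_bool (\<xi> x) * C$x$y * of_bool (\<xi> y))"

definition p1 :: "('e::finite \<Rightarrow> bool) \<Rightarrow> real" where
  "p1 \<xi> = (1 / real CARD('e)) * (\<Sum>x\<in>UNIV. of_bool (\<xi> x))"

definition L0 :: "real^'e^'e \<Rightarrow> 'e::finite cmat \<Rightarrow> 'e cmat" where
  "L0 Q C = (let N = of_nat CARD('e) :: complex; Qc = cmat_of Q in
     mat ((N - 2) / N) ** C + mat (1 / N) ** (C ** Qc + Qc ** C)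
     - mat (2 * trace C / N^2) ** Qc + mat (2 * trace C / N^2))"

end

theory Submission
  imports Defs
begin

(* The proof is a positivity argument over the reals.
   (1) Call X "psd-dual" if tr(X Z) >= 0 for every positive semidefinite Z.  Since Q is
       symmetric with nonnegative entries and unit row sums, I + Q and I - Q are psd-dual,
       and psd-duality is preserved by congruences Y^T X Y, sums and nonnegative multiples.
   (2) The cone generated by the congruences Y^T (I +- Q) Y with Y commuting with Q is
       mapped into itself by L0 when N >= 4, and it contains J and lap R.
   (3) On the cone, X |-> tr(X R) is a Lyapunov function for theta L0: it is nonnegative and
       tr(L0(X) R) = tr(X R) / theta - kappa tr X with kappa > 0.  Hence sum_k theta^k tr L0^k(X)
       converges, and so does the series of the S_xi-values, since 0 <= S_xi <= N tr on the cone.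
   (4) G = J + (2 / (lam tr R)) lap R satisfies G = (1 - theta) J + theta L0(G); unrolling this
       identity gives the partial sums S_xi(G) - theta^m S_xi(L0^m G), whose remainder tends to 0.
   (5) The complex matrices of the statement are the entrywise images of the real ones. *)


lemma matrix_add_rdistrib: "((A::'a::semiring_1^'n^'m) + B) ** C = A ** C + B ** C"
  by (vector matrix_matrix_mult_def sum.distrib[symmetric] field_simps)

lemma matrix_diff_ldistrib: "(A::'a::ring_1^'n^'m) ** (B - C) = A ** B - A ** C"
  by (vector matrix_matrix_mult_def sum_subtractf[symmetric] field_simps)

lemma matrix_diff_rdistrib: "((A::'a::ring_1^'n^'m) - B) ** C = A ** C - B ** C"
  by (vector matrix_matrix_mult_def sum_subtractf[symmetric] field_simps)

lemma matrix_scaleR_left: "(c *\<^sub>R (A::real^'n^'m)) ** B = c *\<^sub>R (A ** B)"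
  by (simp add: scalar_matrix_assoc)

lemma matrix_scaleR_right: "(A::real^'n^'m) ** (c *\<^sub>R B) = c *\<^sub>R (A ** B)"
  by (simp add: matrix_scalar_ac scalar_matrix_assoc)

lemma trace_scaleR: "trace (c *\<^sub>R (A::real^'n^'n)) = c * trace A"
  by (simp add: trace_def sum_distrib_left)

lemmas matrix_linear_simps =
  matrix_add_ldistrib matrix_add_rdistrib matrix_diff_ldistrib matrix_diff_rdistrib
  matrix_scaleR_left matrix_scaleR_right trace_add trace_sub trace_scaleR

lemma matrix_inv_eqI:
  fixes A B :: "'a::field^'n^'n"
  assumes "A ** B = mat 1" and "B ** A = mat 1"
  shows "matrix_inv A = B"
proof -
  have "A ** matrix_inv A = mat 1 \<and> matrix_inv A ** A = mat 1"
    unfolding matrix_inv_def by (rule someI_ex) (use assms in blast)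
  then have left_inv: "matrix_inv A ** A = mat 1" by blast
  have "matrix_inv A = matrix_inv A ** (A ** B)"
    by (simp add: assms(1))
  also have "\<dots> = B"
    by (simp add: matrix_mul_assoc left_inv)
  finally show ?thesis .
qed

lemma inner_axis_mult_axis: "axis i (1::real) \<bullet> (Z *v axis j 1) = Z$i$j"
  by (simp add: inner_vec_def matrix_vector_mult_def axis_def mult.commute[of "Z$_$_"]
      if_distrib if_distribR cong: if_cong)

lemma mat_mult_entry: "(mat c ** A) $ i $ j = c * A$i$j"
  by (simp add: matrix_matrix_mult_def mat_def if_distrib if_distribR cong: if_cong)

lemma mat_mult_mat: "mat a ** mat b = mat (a * b)"
  by (simp add: vec_eq_iff mat_mult_entry) (simp add: mat_def)


definition qform :: "real^'n \<Rightarrow> real^'n^'n \<Rightarrow> real" where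
  "qform v C = v \<bullet> (C *v v)"

lemma qform_add: "qform v (A + B) = qform v A + qform v B"
  by (simp add: qform_def matrix_vector_mult_add_rdistrib inner_add_right)

lemma qform_scaleR: "qform v (c *\<^sub>R A) = c * qform v A"
  by (simp add: qform_def scaleR_matrix_vector_assoc[symmetric])

lemma qform_sum: "qform v Z = (\<Sum>i\<in>UNIV. \<Sum>j\<in>UNIV. v$i * Z$i$j * v$j)"
  by (simp add: qform_def inner_vec_def matrix_vector_mult_def sum_distrib_left mult_ac)

definition psd :: "real^'n^'n \<Rightarrow> bool" where
  "psd Z \<longleftrightarrow> (\<forall>v. 0 \<le> qform v Z)"

definition outer :: "real^'n \<Rightarrow> real^'n^'n" where
  "outer v = (\<chi> i j. v$i * v$j)"

lemma outer_mult_vec: "outer v *v u = (v \<bullet> u) *\<^sub>R v"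
  by (simp add: outer_def matrix_vector_mult_def vec_eq_iff inner_vec_def sum_distrib_left mult_ac)

lemma trace_mult_outer: "trace (A ** outer v) = qform v A"
  by (simp add: trace_def matrix_matrix_mult_def outer_def qform_def inner_vec_def
      matrix_vector_mult_def sum_distrib_left mult_ac)

lemma psd_mat1: "psd (mat 1)"
  by (simp add: psd_def qform_def)

lemma psd_outer: "psd (outer v)"
  by (simp add: psd_def qform_def outer_mult_vec inner_commute)

lemma psd_outer_gap: "psd ((v \<bullet> v) *\<^sub>R mat 1 - outer (v::real^'n))"
  unfolding psd_def qform_def
proof
  fix u :: "real^'n"
  have "(u \<bullet> v)\<^sup>2 \<le> (u \<bullet> u) * (v \<bullet> v)"
    by (rule Cauchy_Schwarz_ineq)
  then show "0 \<le> u \<bullet> (((v \<bullet> v) *\<^sub>R mat 1 - outer v) *v u)"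
    by (simp add: matrix_vector_mult_diff_rdistrib outer_mult_vec inner_diff_right
        scaleR_matrix_vector_assoc[symmetric] power2_eq_square inner_commute mult.commute)
qed

lemma psd_congruence: "psd Z \<Longrightarrow> psd (Y ** Z ** transpose Y)"
  unfolding psd_def qform_def
proof
  fix v assume "\<forall>v. 0 \<le> v \<bullet> (Z *v v)"
  then have "0 \<le> (transpose Y *v v) \<bullet> (Z *v (transpose Y *v v))" by blast
  also have "\<dots> = v \<bullet> ((Y ** Z ** transpose Y) *v v)"
    by (metis dot_lmul_matrix matrix_vector_mul_assoc vector_transpose_matrix transpose_transpose)
  finally show "0 \<le> v \<bullet> ((Y ** Z ** transpose Y) *v v)" .
qed

definition psd_dual :: "real^'n^'n \<Rightarrow> bool" where
  "psd_dual X \<longleftrightarrow> (\<forall>Z. psd Z \<longrightarrow> 0 \<le> trace (X ** Z))"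

lemma psd_dual_add: "psd_dual X \<Longrightarrow> psd_dual Y \<Longrightarrow> psd_dual (X + Y)"
  by (simp add: psd_dual_def matrix_add_rdistrib trace_add)

lemma psd_dual_scaleR: "0 \<le> c \<Longrightarrow> psd_dual X \<Longrightarrow> psd_dual (c *\<^sub>R X)"
  by (simp add: psd_dual_def matrix_scaleR_left trace_scaleR)

text \<open>Congruence preserves psd-duality, since \<open>tr(Y\<^sup>T P Y Z) = tr(P (Y Z Y\<^sup>T))\<close>.\<close>

lemma psd_dual_congruence:
  fixes P :: "real^'n^'n" and Y :: "real^'m^'n"
  assumes "psd_dual P"
  shows "psd_dual (transpose Y ** P ** Y)"
  unfolding psd_dual_def
proof (intro allI impI)
  fix Z :: "real^'m^'m" assume "psd Z"
  have "trace (transpose Y ** P ** Y ** Z) = trace ((P ** Y ** Z) ** transpose Y)"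
    using trace_mul_sym[of "transpose Y" "P ** Y ** Z"] by (simp add: matrix_mul_assoc)
  also have "\<dots> = trace (P ** (Y ** Z ** transpose Y))"
    by (simp add: matrix_mul_assoc)
  also have "\<dots> \<ge> 0"
    using assms psd_congruence[OF \<open>psd Z\<close>, of Y] unfolding psd_dual_def by blast
  finally show "0 \<le> trace (transpose Y ** P ** Y ** Z)" .
qed

lemma psd_dual_trace: "psd_dual X \<Longrightarrow> 0 \<le> trace X"
  using psd_mat1 by (force simp: psd_dual_def)

lemma psd_dual_quadratic:
  assumes "psd_dual X"
  shows "0 \<le> qform v X" and "qform v X \<le> (v \<bullet> v) * trace X"
proof -
  show "0 \<le> qform v X"
    using assms psd_outer by (force simp: psd_dual_def trace_mult_outer)
  have "0 \<le> trace (X ** ((v \<bullet> v) *\<^sub>R mat 1 - outer v))"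
    using assms psd_outer_gap[of v] unfolding psd_dual_def by blast
  then show "qform v X \<le> (v \<bullet> v) * trace X"
    by (simp add: matrix_linear_simps trace_mult_outer)
qed


locale sym_stochastic =
  fixes Q :: "real^'e::finite^'e"
  assumes stochastic: "stochastic Q" and symmetric: "symmetric_mat Q"
begin

lemma entry_nonneg: "0 \<le> Q$x$y"
  using stochastic by (simp add: stochastic_def)

lemma row_sum: "(\<Sum>y\<in>UNIV. Q$x$y) = 1"
  using stochastic by (simp add: stochastic_def)

lemma entry_sym: "Q$x$y = Q$y$x"
  using symmetric by (simp add: symmetric_mat_def)

lemma col_sum: "(\<Sum>x\<in>UNIV. Q$x$y) = 1"
  using row_sum[of y] entry_sym by simp

text \<open>\<open>I \<plusminus> Q\<close> is psd-dual: \<open>2 tr((I + s Q) Z)\<close> is the \<open>Q\<close>-weighted sum over pairs \<open>(x, y)\<close>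
  of the nonnegative numbers \<open>(e\<^sub>x + s e\<^sub>y)\<^sup>T Z (e\<^sub>x + s e\<^sub>y)\<close>.\<close>

lemma psd_dual_I_plus:
  assumes s: "s = 1 \<or> s = -1"
  shows "psd_dual (mat 1 + s *\<^sub>R Q)"
  unfolding psd_dual_def
proof (intro allI impI)
  fix Z :: "real^'e^'e" assume "psd Z"
  define w where "w x y = Z$x$x + Z$y$y + s * Z$x$y + s * Z$y$x" for x y
  have w_nonneg: "0 \<le> w x y" for x y
  proof -
    define u where "u = axis x (1::real) + s *\<^sub>R axis y 1"
    have "0 \<le> u \<bullet> (Z *v u)"
      using \<open>psd Z\<close> by (simp add: psd_def qform_def)
    also have "u \<bullet> (Z *v u) = Z$x$x + s * Z$x$y + s * Z$y$x + s * s * Z$y$y"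
      by (simp add: u_def inner_axis_mult_axis algebra_simps)
    also have "s * s = 1"
      using s by auto
    finally show ?thesis
      by (simp add: w_def algebra_simps)
  qed
  have "(\<Sum>x\<in>UNIV. \<Sum>y\<in>UNIV. Q$x$y * w x y) = 2 * trace ((mat 1 + s *\<^sub>R Q) ** Z)"
  proof -
    have diag1: "(\<Sum>x\<in>UNIV. \<Sum>y\<in>UNIV. Q$x$y * Z$x$x) = trace Z"
      by (simp add: trace_def sum_distrib_right[symmetric] row_sum)
    have diag2: "(\<Sum>x\<in>UNIV. \<Sum>y\<in>UNIV. Q$x$y * Z$y$y) = trace Z"
      by (subst sum.swap) (simp add: trace_def sum_distrib_right[symmetric] col_sum)
    have off1: "(\<Sum>x\<in>UNIV. \<Sum>y\<in>UNIV. Q$x$y * Z$x$y) = trace (Q ** Z)"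
      by (subst sum.swap) (simp add: trace_def matrix_matrix_mult_def entry_sym)
    have off2: "(\<Sum>x\<in>UNIV. \<Sum>y\<in>UNIV. Q$x$y * Z$y$x) = trace (Q ** Z)"
      by (simp add: trace_def matrix_matrix_mult_def)
    have "(\<Sum>x\<in>UNIV. \<Sum>y\<in>UNIV. Q$x$y * w x y) =
        (\<Sum>x\<in>UNIV. \<Sum>y\<in>UNIV. Q$x$y * Z$x$x) + (\<Sum>x\<in>UNIV. \<Sum>y\<in>UNIV. Q$x$y * Z$y$y)
        + s * (\<Sum>x\<in>UNIV. \<Sum>y\<in>UNIV. Q$x$y * Z$x$y)
        + s * (\<Sum>x\<in>UNIV. \<Sum>y\<in>UNIV. Q$x$y * Z$y$x)"
      by (simp add: w_def algebra_simps sum.distrib sum_distrib_left)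
    then show ?thesis
      unfolding diag1 diag2 off1 off2 by (simp add: matrix_linear_simps)
  qed
  moreover have "0 \<le> (\<Sum>x\<in>UNIV. \<Sum>y\<in>UNIV. Q$x$y * w x y)"
    by (intro sum_nonneg mult_nonneg_nonneg entry_nonneg w_nonneg)
  ultimately show "0 \<le> trace ((mat 1 + s *\<^sub>R Q) ** Z)"
    by simp
qed

lemma transpose_Q: "transpose Q = Q"
  by (simp add: transpose_def vec_eq_iff entry_sym)

lemma commute_transpose: "Y ** Q = Q ** Y \<Longrightarrow> transpose Y ** Q = Q ** transpose Y"
  by (metis transpose_Q matrix_transpose_mul)

lemma commute_mult: "A ** Q = Q ** A \<Longrightarrow> B ** Q = Q ** B \<Longrightarrow> (A ** B) ** Q = Q ** (A ** B)"
  by (metis matrix_mul_assoc)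

definition lap :: "real^'e^'e" where
  "lap = mat 1 - Q"

definition slap :: "real^'e^'e" where
  "slap = mat 1 + Q"

lemma psd_dual_lap: "psd_dual lap"
  using psd_dual_I_plus[of "-1"] by (simp add: lap_def)

lemma psd_dual_slap: "psd_dual slap"
  using psd_dual_I_plus[of 1] by (simp add: slap_def)

lemma transpose_lap: "transpose lap = lap"
  by (simp add: lap_def transpose_def vec_eq_iff entry_sym mat_def)

lemma transpose_slap: "transpose slap = slap"
  by (simp add: slap_def transpose_def vec_eq_iff entry_sym mat_def)

lemma lap_plus_slap: "lap + slap = 2 *\<^sub>R mat 1"
  by (simp add: lap_def slap_def vec_eq_iff mat_def)

lemma commute_lap: "Y ** Q = Q ** Y \<Longrightarrow> lap ** Y = Y ** lap"
  by (simp add: lap_def matrix_diff_ldistrib matrix_diff_rdistrib)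

lemma commute_slap: "Y ** Q = Q ** Y \<Longrightarrow> slap ** Y = Y ** slap"
  by (simp add: slap_def matrix_add_ldistrib matrix_add_rdistrib)

lemma lap_slap_commute: "lap ** slap = slap ** lap"
  by (simp add: commute_lap slap_def matrix_add_ldistrib matrix_add_rdistrib)

inductive_set cone :: "(real^'e^'e) set" where
  add: "X \<in> cone \<Longrightarrow> Y \<in> cone \<Longrightarrow> X + Y \<in> cone"
| scale: "0 \<le> c \<Longrightarrow> X \<in> cone \<Longrightarrow> c *\<^sub>R X \<in> cone"
| congruence: "Y ** Q = Q ** Y \<Longrightarrow> P \<in> {slap, lap} \<Longrightarrow> transpose Y ** P ** Y \<in> cone"

lemma cone_commute: "X \<in> cone \<Longrightarrow> X ** Q = Q ** X"
proof (induction rule: cone.induct)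
  case (add X Y) then show ?case by (simp add: matrix_add_ldistrib matrix_add_rdistrib)
next
  case (scale c X) then show ?case by (simp add: matrix_scaleR_left matrix_scaleR_right)
next
  case (congruence Y P)
  have "P ** Q = Q ** P"
    using congruence(2) commute_lap[of Q] commute_slap[of Q] by auto
  then show ?case
    using congruence(1) commute_transpose commute_mult by blast
qed

lemma cone_psd_dual: "X \<in> cone \<Longrightarrow> psd_dual X"
  by (induction rule: cone.induct)
    (auto intro: psd_dual_add psd_dual_scaleR psd_dual_congruence psd_dual_lap psd_dual_slap)

lemma lap_in_cone: "lap \<in> cone"
  using cone.congruence[of "mat 1" lap] by simp

text \<open>Every Gram matrix \<open>Y\<^sup>T Y\<close> of a matrix commuting with \<open>Q\<close> lies in the cone,
  because \<open>lap + slap = 2 I\<close>.\<close>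

lemma gram_in_cone:
  assumes "Y ** Q = Q ** Y"
  shows "transpose Y ** Y \<in> cone"
proof -
  have "transpose Y ** slap ** Y + transpose Y ** lap ** Y = transpose Y ** (lap + slap) ** Y"
    by (simp add: matrix_add_ldistrib matrix_add_rdistrib add.commute)
  also have "\<dots> = 2 *\<^sub>R (transpose Y ** Y)"
    by (simp add: lap_plus_slap matrix_scaleR_left matrix_scaleR_right)
  finally have "transpose Y ** Y = (1/2) *\<^sub>R (transpose Y ** slap ** Y + transpose Y ** lap ** Y)"
    by simp
  also have "\<dots> \<in> cone"
    using assms by (intro cone.scale cone.add cone.congruence) auto
  finally show ?thesis .
qed

lemma slap_identity:
  assumes "P \<in> {slap, lap}"
  shows "P ** slap ** P + slap ** lap ** slap = 2 *\<^sub>R (P ** slap)"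
proof -
  have "slap ** lap ** slap = slap ** slap ** lap"
    by (simp add: lap_slap_commute flip: matrix_mul_assoc)
  moreover have "slap ** lap ** slap = lap ** slap ** slap"
    by (simp add: lap_slap_commute)
  ultimately have "P ** slap ** P + slap ** lap ** slap = P ** slap ** (lap + slap)"
    using assms by (auto simp: matrix_add_ldistrib matrix_mul_assoc)
  then show ?thesis
    by (simp add: lap_plus_slap matrix_scaleR_right)
qed

lemma cone_mult_slap: "X \<in> cone \<Longrightarrow> X ** slap \<in> cone"
proof (induction rule: cone.induct)
  case (add X Y) then show ?case by (simp add: matrix_add_rdistrib cone.add)
next
  case (scale c X) then show ?case by (simp add: matrix_scaleR_left cone.scale)
next
  case (congruence Y P)
  have P_sym: "transpose P = P"
    using congruence(2) transpose_lap transpose_slap by auto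
  have "transpose Y ** P ** Y ** slap = transpose Y ** (P ** slap) ** Y"
    by (metis commute_slap[OF congruence(1)] matrix_mul_assoc)
  also have "\<dots> = (1/2) *\<^sub>R (transpose Y ** (P ** slap ** P + slap ** lap ** slap) ** Y)"
    by (simp add: slap_identity[OF congruence(2)] matrix_scaleR_left matrix_scaleR_right)
  also have "\<dots> = (1/2) *\<^sub>R (transpose (P ** Y) ** slap ** (P ** Y)
                           + transpose (slap ** Y) ** lap ** (slap ** Y))"
    by (simp add: matrix_transpose_mul P_sym transpose_slap matrix_mul_assoc
        matrix_add_ldistrib matrix_add_rdistrib)
  also have "\<dots> \<in> cone"
  proof (intro cone.scale cone.add cone.congruence)
    show "(P ** Y) ** Q = Q ** (P ** Y)"
      using congruence commute_lap[of Q] commute_slap[of Q] commute_mult by blast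
    show "(slap ** Y) ** Q = Q ** (slap ** Y)"
      using congruence(1) commute_slap[of Q] commute_mult by blast
  qed auto
  finally show ?case .
qed

end


definition L0_real :: "real^'e^'e \<Rightarrow> real^'e::finite^'e \<Rightarrow> real^'e^'e" where
  "L0_real Q C = ((real CARD('e) - 2) / real CARD('e)) *\<^sub>R C
     + (1 / real CARD('e)) *\<^sub>R (C ** Q + Q ** C)
     - (2 * trace C / real CARD('e)^2) *\<^sub>R Q + (2 * trace C / real CARD('e)^2) *\<^sub>R mat 1"

definition J_real :: "real^'e::finite^'e" where
  "J_real = (\<chi> i j. 1 / real CARD('e))"

lemma L0_real_add: "L0_real Q (A + B) = L0_real Q A + L0_real Q B"
  by (simp add: L0_real_def trace_add matrix_add_ldistrib matrix_add_rdistrib vec_eq_iff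
      algebra_simps add_divide_distrib)

lemma L0_real_scaleR: "L0_real Q (c *\<^sub>R A) = c *\<^sub>R L0_real Q A"
  by (simp add: L0_real_def trace_scaleR matrix_scaleR_left matrix_scaleR_right vec_eq_iff
      algebra_simps)

lemma L0_real_funpow_add: "(L0_real Q ^^ k) (A + B) = (L0_real Q ^^ k) A + (L0_real Q ^^ k) B"
  by (induction k) (simp_all add: L0_real_add)

lemma L0_real_funpow_scaleR: "(L0_real Q ^^ k) (c *\<^sub>R A) = c *\<^sub>R (L0_real Q ^^ k) A"
  by (induction k) (simp_all add: L0_real_scaleR)

context sym_stochastic
begin

lemma L0_real_lap_form:
  "L0_real Q X = X - (1 / real CARD('e)) *\<^sub>R (X ** lap + lap ** X)
               + (2 * trace X / real CARD('e)^2) *\<^sub>R lap"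
  by (simp add: L0_real_def lap_def matrix_diff_ldistrib matrix_diff_rdistrib vec_eq_iff
      field_simps)

lemma L0_real_commuting:
  assumes "X ** Q = Q ** X"
  shows "L0_real Q X = X - (2 / real CARD('e)) *\<^sub>R (X ** lap)
                     + (2 * trace X / real CARD('e)^2) *\<^sub>R lap"
  by (simp add: L0_real_lap_form commute_lap[OF assms] scaleR_2[symmetric])

text \<open>On the cone, \<open>L0(X) = (N - 4)/N X + 2/N X slap + 2 tr X / N\<^sup>2 lap\<close> is a nonnegative
  combination of cone elements once \<open>N \<ge> 4\<close>.\<close>

lemma cone_L0_real:
  assumes "4 \<le> CARD('e)" and "X \<in> cone"
  shows "L0_real Q X \<in> cone"
proof -
  have "L0_real Q X = ((real CARD('e) - 4) / real CARD('e)) *\<^sub>R X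
          + (2 / real CARD('e)) *\<^sub>R (X ** slap) + (2 * trace X / real CARD('e)^2) *\<^sub>R lap"
    by (simp add: L0_real_commuting[OF cone_commute[OF assms(2)]] lap_def slap_def
        matrix_diff_ldistrib matrix_add_ldistrib vec_eq_iff field_simps)
  also have "\<dots> \<in> cone"
    using assms psd_dual_trace[OF cone_psd_dual[OF assms(2)]]
    by (intro cone.add cone.scale cone_mult_slap lap_in_cone) auto
  finally show ?thesis .
qed

lemma cone_L0_real_funpow: "4 \<le> CARD('e) \<Longrightarrow> X \<in> cone \<Longrightarrow> (L0_real Q ^^ k) X \<in> cone"
  by (induction k) (simp_all add: cone_L0_real)

lemma J_Q: "J_real ** Q = J_real"
  by (simp add: J_real_def matrix_matrix_mult_def vec_eq_iff sum_divide_distrib[symmetric] col_sum)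

lemma Q_J: "Q ** J_real = J_real"
  by (simp add: J_real_def matrix_matrix_mult_def vec_eq_iff sum_divide_distrib[symmetric] row_sum)

lemma J_lap: "J_real ** lap = 0"
  by (simp add: lap_def matrix_diff_ldistrib J_Q)

lemma J_transpose: "transpose J_real = J_real"
  by (simp add: J_real_def transpose_def vec_eq_iff)

lemma trace_J: "trace J_real = 1"
  by (simp add: J_real_def trace_def)

text \<open>\<open>J\<close> is an idempotent fixed by \<open>Q\<close>, hence \<open>J = J\<^sup>T slap J / 2\<close> lies in the cone.\<close>

lemma J_in_cone: "J_real \<in> cone"
proof -
  have J_J: "J_real ** J_real = J_real"
    by (simp add: J_real_def matrix_matrix_mult_def vec_eq_iff)
  have "transpose J_real ** slap ** J_real = J_real + J_real"
    by (simp only: slap_def matrix_add_ldistrib matrix_add_rdistrib J_Q J_transpose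
        matrix_mul_rid J_J)
  then have "J_real = (1/2) *\<^sub>R (transpose J_real ** slap ** J_real)"
    by (simp add: vec_eq_iff)
  also have "\<dots> \<in> cone"
    by (intro cone.scale cone.congruence) (auto simp: J_Q Q_J)
  finally show ?thesis .
qed

lemma L0_real_J: "L0_real Q J_real = J_real + (2 / real CARD('e)^2) *\<^sub>R lap"
  by (simp add: L0_real_commuting J_Q Q_J J_lap trace_J)

end


text \<open>Since \<open>lap\<close> is
  psd-dual, \<open>M\<close> is coercive, so \<open>R\<close> exists and is positive definite.\<close>

locale resolvent = sym_stochastic Q for Q :: "real^'e::finite^'e" +
  fixes lam :: real
  assumes lam_pos: "0 < lam"
begin

definition M :: "real^'e^'e" where
  "M = lam *\<^sub>R mat 1 + 2 *\<^sub>R lap"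

definition R :: "real^'e^'e" where
  "R = matrix_inv M"

lemma M_coercive: "lam * (v \<bullet> v) \<le> v \<bullet> (M *v v)"
  using psd_dual_quadratic(1)[OF psd_dual_lap, of v]
  by (simp add: qform_def M_def matrix_vector_mult_add_rdistrib
      scaleR_matrix_vector_assoc[symmetric] inner_add_right)

lemma M_transpose: "transpose M = M"
  by (simp add: M_def lap_def transpose_def vec_eq_iff mat_def entry_sym)

lemma M_commute: "M ** Q = Q ** M"
  by (simp add: M_def matrix_add_ldistrib matrix_add_rdistrib matrix_scaleR_left
      matrix_scaleR_right commute_lap)

lemma M_R: "M ** R = mat 1" and R_M: "R ** M = mat 1"
proof -
  have "v = 0" if "M *v v = 0" for v
  proof -
    have "lam * (v \<bullet> v) \<le> 0"
      using M_coercive[of v] that by simp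
    then have "v \<bullet> v \<le> 0"
      using lam_pos by (simp add: mult_le_0_iff)
    then show "v = 0"
      by (metis inner_eq_zero_iff inner_ge_zero order_antisym)
  qed
  then obtain B where "B ** M = mat 1"
    using matrix_left_invertible_ker[of M] by blast
  moreover from this have "M ** B = mat 1"
    using matrix_left_right_inverse by blast
  ultimately have "R = B"
    unfolding R_def by (rule matrix_inv_eqI[rotated])
  with \<open>B ** M = mat 1\<close> \<open>M ** B = mat 1\<close> show "M ** R = mat 1" "R ** M = mat 1"
    by simp_all
qed

lemma R_commute: "R ** Q = Q ** R"
proof -
  have "R ** Q = R ** Q ** (M ** R)" by (simp add: M_R)
  also have "\<dots> = R ** (M ** Q) ** R" by (simp add: matrix_mul_assoc M_commute)
  also have "\<dots> = Q ** R" by (simp add: matrix_mul_assoc R_M)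
  finally show ?thesis .
qed

lemma R_transpose: "transpose R = R"
proof -
  have "transpose R ** M = mat 1"
    by (metis M_transpose M_R matrix_transpose_mul transpose_mat)
  have "transpose R = (transpose R ** M) ** R"
    by (simp add: M_R flip: matrix_mul_assoc)
  also have "\<dots> = R" using \<open>transpose R ** M = mat 1\<close> by simp
  finally show ?thesis .
qed

text \<open>The quadratic form of \<open>R\<close> dominates \<open>lam |R v|\<^sup>2\<close>, since \<open>v = M (R v)\<close>.\<close>

lemma R_coercive: "lam * ((R *v v) \<bullet> (R *v v)) \<le> qform v R"
proof -
  have "qform v R = (M *v (R *v v)) \<bullet> (R *v v)"
    by (simp add: qform_def matrix_vector_mul_assoc M_R)
  also have "\<dots> = (R *v v) \<bullet> (M *v (R *v v))"
    by (metis M_transpose dot_lmul_matrix transpose_matrix_vector)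
  finally show ?thesis
    using M_coercive by simp
qed

lemma psd_R: "psd R"
  unfolding psd_def
proof
  fix v
  have "0 \<le> lam * ((R *v v) \<bullet> (R *v v))" using lam_pos by simp
  then show "0 \<le> qform v R" using R_coercive order_trans by blast
qed

lemma trace_R_pos: "0 < trace R"
proof -
  have "trace R = (\<Sum>x\<in>UNIV. qform (axis x 1) R)"
    by (simp add: trace_def qform_def inner_axis_mult_axis)
  also have "\<dots> > 0"
  proof (rule sum_pos)
    fix x :: 'e
    have "R *v axis x 1 \<noteq> 0"
      by (metis M_R axis_eq_0_iff matrix_vector_mul_assoc matrix_vector_mul_lid
          matrix_vector_mult_0_right zero_neq_one)
    then have "0 < lam * ((R *v axis x 1) \<bullet> (R *v axis x 1))" using lam_pos by simp
    then show "0 < qform (axis x 1) R" using R_coercive by (rule less_le_trans)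
  qed auto
  finally show ?thesis .
qed

text \<open>The identity \<open>(lam I + 2 lap) R = I\<close>, solved for \<open>lap R\<close>.\<close>

lemma lap_R: "lap ** R = (1/2) *\<^sub>R (mat 1 - lam *\<^sub>R R)"
proof -
  have "lam *\<^sub>R R + 2 *\<^sub>R (lap ** R) = mat 1"
    using M_R by (simp add: M_def matrix_add_rdistrib matrix_scaleR_left)
  then have "2 *\<^sub>R (lap ** R) = mat 1 - lam *\<^sub>R R"
    by (simp add: eq_diff_eq add.commute)
  then have "(1/2) *\<^sub>R (2 *\<^sub>R (lap ** R)) = (1/2) *\<^sub>R (mat 1 - lam *\<^sub>R R)"
    by simp
  then show ?thesis
    by simp
qed

text \<open>\<open>lap R = R M lap R = lam R\<^sup>T lap R + 2 (lap R)\<^sup>T (lap R)\<close> lies in the cone.\<close>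

lemma lap_R_in_cone: "lap ** R \<in> cone"
proof -
  have M_lap: "M ** lap = lam *\<^sub>R lap + 2 *\<^sub>R (lap ** lap)"
    by (simp add: M_def matrix_add_rdistrib matrix_scaleR_left)
  have R_lap: "R ** lap ** lap ** R = R ** lap ** R ** lap"
    by (metis commute_lap[OF R_commute] matrix_mul_assoc)
  have "lap ** R = R ** M ** lap ** R"
    by (simp add: R_M)
  also have "\<dots> = R ** (lam *\<^sub>R lap + 2 *\<^sub>R (lap ** lap)) ** R"
    by (simp add: matrix_mul_assoc flip: M_lap)
  also have "\<dots> = lam *\<^sub>R (transpose R ** lap ** R) + 2 *\<^sub>R (transpose (lap ** R) ** (lap ** R))"
    by (simp add: matrix_add_ldistrib matrix_add_rdistrib matrix_scaleR_left matrix_scaleR_right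
        matrix_transpose_mul R_transpose transpose_lap matrix_mul_assoc R_lap
        commute_lap[OF R_commute])
  also have "\<dots> \<in> cone"
  proof (intro cone.add cone.scale cone.congruence gram_in_cone)
    show "lap ** R ** Q = Q ** (lap ** R)"
      using commute_mult[OF commute_lap[of Q, simplified] R_commute] by simp
  qed (use lam_pos R_commute in auto)
  finally show ?thesis .
qed


definition theta :: real where
  "theta = real CARD('e) / (real CARD('e) + lam)"

lemma theta_pos: "0 < theta" and theta_less_1: "theta < 1"
  using lam_pos by (auto simp: theta_def)

lemma trace_L0_real_R:
  "trace (L0_real Q X ** R) = trace (X ** R) / theta - (lam * trace R / real CARD('e)^2) * trace X"
proof -
  let ?N = "real CARD('e)"
  have "trace (lap ** X ** R) = trace (X ** R ** lap)"
    using trace_mul_sym[of lap "X ** R"] by (simp add: matrix_mul_assoc)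
  also have "\<dots> = trace (X ** (lap ** R))"
    by (simp add: commute_lap[OF R_commute] matrix_mul_assoc)
  finally have lap_X: "trace (lap ** X ** R) = trace (X ** (lap ** R))" .
  have X_lap_R: "trace (X ** (lap ** R)) = trace X / 2 - lam / 2 * trace (X ** R)"
    by (simp add: lap_R matrix_linear_simps)
  have lap_R_trace: "trace (lap ** R) = ?N / 2 - lam / 2 * trace R"
    by (simp add: lap_R matrix_linear_simps trace_I)
  have "trace (L0_real Q X ** R) = trace (X ** R)
          - (1 / ?N) * (trace (X ** (lap ** R)) + trace (lap ** X ** R))
          + (2 * trace X / ?N^2) * trace (lap ** R)"
    by (simp add: L0_real_lap_form matrix_linear_simps matrix_mul_assoc)
  then show ?thesis
    unfolding lap_X X_lap_R lap_R_trace using lam_pos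
    by (simp add: theta_def field_simps power2_eq_square)
qed

text \<open>Along an orbit in the cone, \<open>u\<^sub>k = theta\<^sup>k tr(X\<^sub>k R) \<ge> 0\<close> decreases by
  \<open>kappa theta\<^sup>k\<^sup>+\<^sup>1 tr X\<^sub>k\<close> at each step, so the weighted traces have bounded partial sums.\<close>

lemma summable_trace_orbit:
  assumes card: "4 \<le> CARD('e)" and X0: "X0 \<in> cone"
  shows "summable (\<lambda>k. theta^k * trace ((L0_real Q ^^ k) X0))"
proof -
  define X where "X k = (L0_real Q ^^ k) X0" for k
  define kappa where "kappa = lam * trace R / real CARD('e)^2"
  define u where "u k = theta^k * trace (X k ** R)" for k
  have X_cone: "X k \<in> cone" for k
    unfolding X_def using cone_L0_real_funpow[OF card X0] .
  have kappa_pos: "0 < kappa"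
    using lam_pos trace_R_pos by (simp add: kappa_def)
  have u_nonneg: "0 \<le> u k" for k
    using cone_psd_dual[OF X_cone] psd_R theta_pos by (simp add: psd_dual_def u_def)
  have u_step: "u (Suc k) = u k - kappa * theta^(Suc k) * trace (X k)" for k
    using theta_pos by (simp add: u_def X_def trace_L0_real_R kappa_def field_simps)
  have telescope: "(\<Sum>k<m. kappa * theta^(Suc k) * trace (X k)) = u 0 - u m" for m
    by (induction m) (simp_all add: u_step)
  show ?thesis
  proof (rule summableI_nonneg_bounded)
    show "0 \<le> theta^k * trace ((L0_real Q ^^ k) X0)" for k
      using psd_dual_trace[OF cone_psd_dual[OF X_cone]] theta_pos by (simp add: X_def)
  next
    fix m
    have "(\<Sum>k<m. theta^k * trace ((L0_real Q ^^ k) X0))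
          = (\<Sum>k<m. kappa * theta^(Suc k) * trace (X k)) / (kappa * theta)"
      using theta_pos kappa_pos by (simp add: sum_divide_distrib X_def)
    also have "\<dots> \<le> u 0 / (kappa * theta)"
      unfolding telescope using u_nonneg[of m] theta_pos kappa_pos
      by (simp add: divide_right_mono)
    finally show "(\<Sum>k<m. theta^k * trace ((L0_real Q ^^ k) X0)) \<le> u 0 / (kappa * theta)" .
  qed
qed

text \<open>Since \<open>0 \<le> qform v \<le> |v|\<^sup>2 tr\<close> on the cone, the quadratic forms along an orbit are
  summable as well.\<close>

lemma summable_qform_orbit:
  assumes card: "4 \<le> CARD('e)" and X0: "X0 \<in> cone"
  shows "summable (\<lambda>k. theta^k * qform v ((L0_real Q ^^ k) X0))"
    and "0 \<le> theta^k * qform v ((L0_real Q ^^ k) X0)"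
proof -
  note bounds = psd_dual_quadratic[OF cone_psd_dual[OF cone_L0_real_funpow[OF card X0]]]
  show nonneg: "0 \<le> theta^k * qform v ((L0_real Q ^^ k) X0)" for k
    using bounds(1) theta_pos by simp
  have upper: "theta^k * qform v ((L0_real Q ^^ k) X0)
               \<le> (v \<bullet> v) * (theta^k * trace ((L0_real Q ^^ k) X0))" for k
    using mult_left_mono[OF bounds(2), of "theta^k"] theta_pos by (simp add: mult_ac)
  show "summable (\<lambda>k. theta^k * qform v ((L0_real Q ^^ k) X0))"
  proof (rule summable_comparison_test')
    show "summable (\<lambda>k. (v \<bullet> v) * (theta^k * trace ((L0_real Q ^^ k) X0)))"
      by (rule summable_mult[OF summable_trace_orbit[OF card X0]])
    show "norm (theta^k * qform v ((L0_real Q ^^ k) X0))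
            \<le> (v \<bullet> v) * (theta^k * trace ((L0_real Q ^^ k) X0))" for k
      using nonneg[of k] upper[of k] by simp
  qed
qed


text \<open>Its second part \<open>lap R\<close> is an eigenvector of \<open>L0\<close> up to a
  multiple of \<open>lap\<close>, and this multiple cancels against the one produced by \<open>L0(J)\<close>.\<close>

definition G :: "real^'e^'e" where
  "G = J_real + (2 / (lam * trace R)) *\<^sub>R (lap ** R)"

lemma L0_real_lap_R:
  "L0_real Q (lap ** R)
     = (1 / theta) *\<^sub>R (lap ** R) - (lam * trace R / real CARD('e)^2) *\<^sub>R lap"
proof -
  have commute: "(lap ** R) ** Q = Q ** (lap ** R)"
    using commute_mult[OF commute_lap[of Q, simplified] R_commute] by simp
  have lap_R_lap: "lap ** R ** lap = (1/2) *\<^sub>R (lap - lam *\<^sub>R (lap ** R))"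
    by (simp add: lap_R matrix_linear_simps commute_lap[OF R_commute, symmetric])
  have trace_lap_R: "trace (lap ** R) = real CARD('e) / 2 - lam / 2 * trace R"
    by (simp add: lap_R matrix_linear_simps trace_I)
  show ?thesis
    unfolding L0_real_commuting[OF commute] lap_R_lap trace_lap_R using lam_pos
    by (simp add: theta_def vec_eq_iff field_simps power2_eq_square)
qed

lemma G_fixed: "G = (1 - theta) *\<^sub>R J_real + theta *\<^sub>R L0_real Q G"
  using theta_pos lam_pos trace_R_pos
  by (simp add: G_def L0_real_add L0_real_scaleR L0_real_J L0_real_lap_R vec_eq_iff
      field_simps power2_eq_square)

lemma G_in_cone: "G \<in> cone"
  unfolding G_def using lam_pos trace_R_pos
  by (intro cone.add cone.scale J_in_cone lap_R_in_cone) auto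

lemma orbit_partial_sums:
  "(\<Sum>k<m. (1 - theta) * theta^k * qform v ((L0_real Q ^^ k) J_real))
     = qform v G - theta^m * qform v ((L0_real Q ^^ m) G)"
proof (induction m)
  case 0
  then show ?case by simp
next
  case (Suc m)
  have "(L0_real Q ^^ m) G
        = (1 - theta) *\<^sub>R (L0_real Q ^^ m) J_real + theta *\<^sub>R (L0_real Q ^^ Suc m) G"
    by (subst G_fixed)
      (simp add: L0_real_funpow_add L0_real_funpow_scaleR funpow_Suc_right del: funpow.simps)
  then have "qform v ((L0_real Q ^^ m) G) = (1 - theta) * qform v ((L0_real Q ^^ m) J_real)
                                             + theta * qform v ((L0_real Q ^^ Suc m) G)"
    by (simp only: qform_add qform_scaleR)
  then have "theta^m * qform v ((L0_real Q ^^ m) G)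
      = theta^m * ((1 - theta) * qform v ((L0_real Q ^^ m) J_real)
                   + theta * qform v ((L0_real Q ^^ Suc m) G))"
    by (rule arg_cong)
  also have "\<dots> = (1 - theta) * theta^m * qform v ((L0_real Q ^^ m) J_real)
                    + theta^(Suc m) * qform v ((L0_real Q ^^ Suc m) G)"
    by (simp only: algebra_simps power_Suc)
  finally have "theta^m * qform v ((L0_real Q ^^ m) G)
      = (1 - theta) * theta^m * qform v ((L0_real Q ^^ m) J_real)
        + theta^(Suc m) * qform v ((L0_real Q ^^ Suc m) G)" .
  with Suc show ?case
    by (simp only: sum.lessThan_Suc)
qed

lemma orbit_series:
  assumes card: "4 \<le> CARD('e)"
  shows "summable (\<lambda>k. \<bar>(1 - theta) * theta^k * qform v ((L0_real Q ^^ k) J_real)\<bar>)"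
    and "(\<lambda>k. (1 - theta) * theta^k * qform v ((L0_real Q ^^ k) J_real)) sums qform v G"
proof -
  have "0 \<le> 1 - theta"
    using theta_less_1 by simp
  then have "\<bar>(1 - theta) * theta^k * qform v ((L0_real Q ^^ k) J_real)\<bar>
             = (1 - theta) * (theta^k * qform v ((L0_real Q ^^ k) J_real))" for k
    using summable_qform_orbit(2)[OF card J_in_cone] by (metis abs_of_nonneg mult.assoc
        mult_nonneg_nonneg)
  then show "summable (\<lambda>k. \<bar>(1 - theta) * theta^k * qform v ((L0_real Q ^^ k) J_real)\<bar>)"
    using summable_mult[OF summable_qform_orbit(1)[OF card J_in_cone], of "1 - theta"] by simp
  have remainder: "(\<lambda>m. theta^m * qform v ((L0_real Q ^^ m) G)) \<longlonglongrightarrow> 0"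
    by (rule summable_LIMSEQ_zero[OF summable_qform_orbit(1)[OF card G_in_cone]])
  show "(\<lambda>k. (1 - theta) * theta^k * qform v ((L0_real Q ^^ k) J_real)) sums qform v G"
    unfolding sums_def orbit_partial_sums
    using tendsto_diff[OF tendsto_const remainder, of "qform v G"] by simp
qed

end


lemma cmat_of_entry [simp]: "cmat_of A $ i $ j = complex_of_real (A$i$j)"
  by (simp add: cmat_of_def)

lemma cmat_of_mult: "cmat_of (A ** B) = cmat_of A ** cmat_of B"
  by (simp add: vec_eq_iff matrix_matrix_mult_def)

lemma cmat_of_diff: "cmat_of (A - B) = cmat_of A - cmat_of B"
  by (simp add: vec_eq_iff)

lemma cmat_of_mat: "cmat_of (mat c) = mat (complex_of_real c)"
  by (simp add: vec_eq_iff mat_def)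

lemma cmat_of_scaleR: "cmat_of (c *\<^sub>R A) = mat (complex_of_real c) ** cmat_of A"
  by (simp add: vec_eq_iff mat_mult_entry)

lemma trace_cmat_of: "trace (cmat_of A) = complex_of_real (trace A)"
  by (simp add: trace_def)

lemma matrix_inv_cmat_of:
  assumes "A ** B = mat 1" and "B ** A = mat 1"
  shows "matrix_inv (cmat_of A) = cmat_of B"
  using assms by (intro matrix_inv_eqI) (simp_all flip: cmat_of_mult add: cmat_of_mat)

lemma L0_cmat_of: "L0 Q (cmat_of C) = cmat_of (L0_real Q C)"
  unfolding L0_def Let_def L0_real_def
  by (simp add: vec_eq_iff mat_mult_entry trace_cmat_of flip: cmat_of_mult) (simp add: mat_def)

lemma L0_funpow_cmat_of: "(L0 Q ^^ n) (cmat_of C) = cmat_of ((L0_real Q ^^ n) C)"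
  by (induction n) (simp_all add: L0_cmat_of)

lemma Jmat_cmat_of: "Jmat = cmat_of J_real"
  by (simp add: vec_eq_iff Jmat_def J_real_def)

definition indicator_vec :: "('e::finite \<Rightarrow> bool) \<Rightarrow> real^'e" where
  "indicator_vec \<xi> = (\<chi> i. of_bool (\<xi> i))"

lemma S_xi_cmat_of: "S_xi \<xi> (cmat_of C) = complex_of_real (qform (indicator_vec \<xi>) C)"
  by (simp add: S_xi_def qform_sum indicator_vec_def)

lemma qform_J:
  fixes \<xi> :: "'e::finite \<Rightarrow> bool"
  shows "qform (indicator_vec \<xi>) J_real / real CARD('e) = (p1 \<xi>)\<^sup>2"
proof -
  have "qform (indicator_vec \<xi>) J_real
        = (\<Sum>x\<in>UNIV. \<Sum>y\<in>UNIV. of_bool (\<xi> x) * of_bool (\<xi> y)) / real CARD('e)"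
    by (simp add: qform_sum indicator_vec_def J_real_def sum_divide_distrib
        del: sum_of_bool_eq sum_mult_of_bool_eq sum_of_bool_mult_eq)
  also have "\<dots> = (\<Sum>x\<in>UNIV. of_bool (\<xi> x))\<^sup>2 / real CARD('e)"
    by (simp only: power2_eq_square sum_product)
  finally show ?thesis
    by (simp add: p1_def power_divide power2_eq_square del: sum_of_bool_eq)
qed

context resolvent
begin

lemma cmat_of_R: "matrix_inv (mat (complex_of_real lam + 2) - mat 2 ** cmat_of Q) = cmat_of R"
proof -
  have "mat (complex_of_real lam + 2) - mat 2 ** cmat_of Q = cmat_of M"
    by (simp add: M_def lap_def vec_eq_iff mat_mult_entry) (simp add: mat_def)
  then show ?thesis
    using matrix_inv_cmat_of[OF M_R R_M] by simp
qed

lemma cmat_of_limit_part: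
  "mat (1 / (complex_of_real lam * trace (cmat_of R))) ** (mat 2 ** (mat 1 - cmat_of Q) ** cmat_of R)
     = cmat_of ((2 / (lam * trace R)) *\<^sub>R (lap ** R))"
  by (simp add: lap_def cmat_of_scaleR cmat_of_mult cmat_of_diff cmat_of_mat trace_cmat_of
      matrix_mul_assoc mat_mult_mat)

lemma series_real:
  fixes \<xi> :: "'e \<Rightarrow> bool"
  assumes card: "4 \<le> CARD('e)"
  defines "a \<equiv> \<lambda>n. lam / (real CARD('e) + lam) * (real CARD('e) / (real CARD('e) + lam))^n
                    * (1 / real CARD('e)) * qform (indicator_vec \<xi>) ((L0_real Q ^^ n) J_real)"
  shows "summable (\<lambda>n. \<bar>a n\<bar>)"
    and "a sums ((p1 \<xi>)\<^sup>2 + (1 / real CARD('e))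
                   * qform (indicator_vec \<xi>) ((2 / (lam * trace R)) *\<^sub>R (lap ** R)))"
proof -
  let ?v = "indicator_vec \<xi>"
  have "1 - theta = lam / (real CARD('e) + lam)"
    using lam_pos by (simp add: theta_def field_simps)
  then have a_eq: "a = (\<lambda>n. (1 / real CARD('e))
                           * ((1 - theta) * theta^n * qform ?v ((L0_real Q ^^ n) J_real)))"
    by (simp add: a_def theta_def fun_eq_iff mult_ac)
  show "summable (\<lambda>n. \<bar>a n\<bar>)"
    using summable_mult[OF orbit_series(1)[OF card, of ?v], of "1 / real CARD('e)"]
    by (simp add: a_eq abs_mult)
  have "qform ?v G / real CARD('e)
        = (p1 \<xi>)\<^sup>2 + (1 / real CARD('e)) * qform ?v ((2 / (lam * trace R)) *\<^sub>R (lap ** R))"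
    by (simp add: G_def qform_add add_divide_distrib qform_J)
  then show "a sums ((p1 \<xi>)\<^sup>2 + (1 / real CARD('e))
                   * qform ?v ((2 / (lam * trace R)) *\<^sub>R (lap ** R)))"
    unfolding a_eq using sums_mult[OF orbit_series(2)[OF card, of ?v], of "1 / real CARD('e)"]
    by simp
qed

end

theorem lemma4p1:
  fixes Q :: "real^'e::finite^'e" and lam :: real and \<xi> :: "'e \<Rightarrow> bool"
  assumes "CARD('e) > 8"
    and "stochastic Q" and "irreducible_mat Q" and "symmetric_mat Q" and "trace Q = 0"
    and "lam > 0"
  shows "let N = of_nat CARD('e) :: complex;
             R = matrix_inv (mat (complex_of_real lam + 2) - mat 2 ** cmat_of Q);
             a = (\<lambda>n. complex_of_real (lam / (real CARD('e) + lam))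
                      * complex_of_real ((real CARD('e) / (real CARD('e) + lam)) ^ n)
                      * (1 / N) * S_xi \<xi> ((L0 Q ^^ n) Jmat))
         in summable (\<lambda>n. norm (a n))
            \<and> a sums (complex_of_real ((p1 \<xi>)\<^sup>2)
                 + (1 / N) * S_xi \<xi> (mat (1 / (complex_of_real lam * trace R))
                      ** (mat 2 ** (mat 1 - cmat_of Q) ** R)))"
proof -
  interpret resolvent Q lam
    using assms by unfold_locales auto
  have card: "4 \<le> CARD('e)"
    using assms(1) by simp
  have terms: "complex_of_real (lam / (real CARD('e) + lam))
                 * complex_of_real ((real CARD('e) / (real CARD('e) + lam)) ^ n)
                 * (1 / of_nat CARD('e)) * S_xi \<xi> ((L0 Q ^^ n) Jmat)
      = complex_of_real (lam / (real CARD('e) + lam) * (real CARD('e) / (real CARD('e) + lam))^n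
                 * (1 / real CARD('e)) * qform (indicator_vec \<xi>) ((L0_real Q ^^ n) J_real))" for n
    by (simp add: L0_funpow_cmat_of Jmat_cmat_of S_xi_cmat_of)
  have limit: "complex_of_real ((p1 \<xi>)\<^sup>2) + (1 / of_nat CARD('e)) * S_xi \<xi> (cmat_of X)
      = complex_of_real ((p1 \<xi>)\<^sup>2 + (1 / real CARD('e)) * qform (indicator_vec \<xi>) X)" for X
    by (simp add: S_xi_cmat_of)
  show ?thesis
    using series_real[OF card, of \<xi>]
    unfolding Let_def cmat_of_R cmat_of_limit_part terms limit norm_of_real sums_of_real_iff
    by blast
qed

end
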